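(* For every $n\ge 3$ and all elements $c_1,\dots,c_{n-1}$ of a commutative $\mathbb{Q}$-algebra, \[S_0(n)(c_1,\dots,c_{n-1})=\sum_{\substack{i_1+i_2=n-1\\ i_1,i_2\ge1}}c_{i_1}c_{i_2}.\]
   Context: Let $a_0,a_1,\dots$ be indeterminates and $a(x)=\sum_{i\ge0}a_ix^i$. For a positive integer $j$ set $G(x)=\prod_{i=0}^{j-1}\frac{1+a(x)x^2}{1+ix}$, $H(x)=\prod_{i=1-j}^{-1}\frac{1+ix}{1+a(x)x^2}$, $u=2j-1$, $v=j(j-1)$. For each $n\ge1$ there are unique polynomials $S_0(n),\dots,S_n(n)\in\mathbb{Q}[a_0,\dots,a_{n-2}]$, independent of $j$, such that for every positive integer $j$ the coefficient of $x^{n-1}$ in $\frac{G(x)-H(x)}{x^2}(1+a(x)x^2)$ equals $u\big(a_{n-1}+S_0(n)+\sum_{i=1}^nS_i(n)v^i\big)$. $S_i(n)(c_1,\dots,c_{n-1})$ denotes the result of substituting $a_k=c_{k+1}$ for $0\le k\le n-2$. *)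

theory Defs
  imports "HOL-Library.Poly_Mapping" "HOL-Computational_Algebra.Formal_Power_Series"
begin

text \<open>Multivariate polynomials over the rationals in the indeterminates a_0, a_1, ...,
  represented in the standard way as finitely supported maps from monomials
  (finitely supported exponent vectors) to rational coefficients.\<close>
type_synonym qpoly = "(nat \<Rightarrow>\<^sub>0 nat) \<Rightarrow>\<^sub>0 rat"

definition Var :: "nat \<Rightarrow> qpoly" where
  "Var k = Poly_Mapping.single (Poly_Mapping.single k 1) 1"

definition vars :: "qpoly \<Rightarrow> nat set" where
  "vars p = \<Union> (Poly_Mapping.keys ` Poly_Mapping.keys p)"

definition a_fps :: "qpoly fps" where
  "a_fps = Abs_fps Var"

definition G_fps :: "nat \<Rightarrow> qpoly fps" where
  "G_fps j = (\<Prod>i\<in>{0..<j}. (1 + a_fps * fps_X ^ 2) *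
               fps_right_inverse (1 + of_nat i * fps_X) 1)"

definition H_fps :: "nat \<Rightarrow> qpoly fps" where
  "H_fps j = (\<Prod>i\<in>{1 - int j..-1}. (1 + of_int i * fps_X) *
               fps_right_inverse (1 + a_fps * fps_X ^ 2) 1)"

text \<open>(G(x) - H(x))/x^2 * (1 + a(x) x^2); G - H is divisible by x^2, so dividing
  by x^2 is shifting by 2.\<close>
definition F_fps :: "nat \<Rightarrow> qpoly fps" where
  "F_fps j = fps_shift 2 (G_fps j - H_fps j) * (1 + a_fps * fps_X ^ 2)"

definition S_prop :: "nat \<Rightarrow> (nat \<Rightarrow> qpoly) \<Rightarrow> bool" where
  "S_prop n S \<longleftrightarrow>
     (\<forall>i>n. S i = 0) \<and>
     (\<forall>i\<le>n. vars (S i) \<subseteq> {..<n - 1}) \<and>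
     (\<forall>j::nat. j > 0 \<longrightarrow>
        fps_nth (F_fps j) (n - 1) =
          of_nat (2 * j - 1) *
            (Var (n - 1) + S 0 + (\<Sum>i = 1..n. S i * of_nat (j * (j - 1)) ^ i)))"

definition S :: "nat \<Rightarrow> nat \<Rightarrow> qpoly" where
  "S n = (THE T. S_prop n T)"

text \<open>Evaluation of p at a_k = c_(k+1), in a commutative ring with structure map
  phi from the rationals (a commutative Q-algebra).\<close>
definition eval_shift :: "(rat \<Rightarrow> 'a::comm_ring_1) \<Rightarrow> (nat \<Rightarrow> 'a) \<Rightarrow> qpoly \<Rightarrow> 'a" where
  "eval_shift \<phi> c p =
     (\<Sum>m\<in>Poly_Mapping.keys p. \<phi> (Poly_Mapping.lookup p m) *
        (\<Prod>k\<in>Poly_Mapping.keys m. c (k + 1) ^ Poly_Mapping.lookup m k))"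

end

(* At j = 1 we have u = 1, v = 0, G(x) = 1 + a(x) x^2 and H(x) = 1, so the defining identity
   reads a_(n-1) + S_0(n) = [x^(n-1)] a(x)(1 + a(x) x^2) = a_(n-1) + sum_i a_i a_(n-3-i).

   The substance is that the family S(n) exists at all, so that the definite description
   defining S picks it out. Extend G and H to one family G_j over all integers j, with
   H = G_(1-j). Every coefficient of G_j is a polynomial in j, since its forward difference in j
   is built from lower coefficients; hence so is the coefficient F_j of x^(n-1), and F_j is odd
   under j |-> 1 - j, i.e. of the form u Q(v). Giving a_k the weight k + 2, F_j has weight at
   most n + 1, and the only monomial of that weight involving an a_k with k >= n - 1 is a_(n-1),
   which occurs with coefficient u; the rest involves only a_0, ..., a_(n-2). Uniqueness holds
   because v = j(j - 1) takes infinitely many values. *)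

theory Submission
  imports Defs "HOL-Computational_Algebra.Polynomial"
begin

unbundle fps_syntax

type_synonym monomial = "nat \<Rightarrow>\<^sub>0 nat"

lemma lookup_single_zero_mult:
  "Poly_Mapping.lookup (Poly_Mapping.single 0 s * p) m = s * Poly_Mapping.lookup p m"
  by (simp add: mult_map_scale_conv_mult[symmetric] map.rep_eq when_def)

lemma lookup_of_int_mult:
  "Poly_Mapping.lookup (of_int k * p) m = of_int k * Poly_Mapping.lookup (p :: qpoly) m"
  by (metis lookup_single_zero_mult single_of_int)

lemma lookup_of_nat_mult:
  "Poly_Mapping.lookup (of_nat k * p) m = of_nat k * Poly_Mapping.lookup (p :: qpoly) m"
  by (metis lookup_single_zero_mult single_of_nat)

lemma single_zero_inverse_mult_of_nat:
  "k \<noteq> 0 \<Longrightarrow> Poly_Mapping.single 0 (1 / of_nat k) * (of_nat k :: qpoly) = 1"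
  by (simp flip: single_of_nat add: mult_single)

lemma add_eq_single_one_iff:
  fixes a b :: "'a \<Rightarrow>\<^sub>0 nat"
  shows "a + b = Poly_Mapping.single i 1 \<longleftrightarrow>
    (a = 0 \<and> b = Poly_Mapping.single i 1) \<or> (a = Poly_Mapping.single i 1 \<and> b = 0)"
proof
  assume "a + b = Poly_Mapping.single i 1"
  then have h: "Poly_Mapping.lookup a k + Poly_Mapping.lookup b k = (1 when i = k)" for k
    by (metis lookup_add lookup_single)
  have off: "Poly_Mapping.lookup a k = 0 \<and> Poly_Mapping.lookup b k = 0" if "k \<noteq> i" for k
    using h[of k] that by simp
  have "Poly_Mapping.lookup a i + Poly_Mapping.lookup b i = 1" using h[of i] by simp
  then consider "Poly_Mapping.lookup a i = 0" "Poly_Mapping.lookup b i = 1"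
    | "Poly_Mapping.lookup a i = 1" "Poly_Mapping.lookup b i = 0" by linarith
  then show "(a = 0 \<and> b = Poly_Mapping.single i 1) \<or> (a = Poly_Mapping.single i 1 \<and> b = 0)"
  proof cases
    case 1
    have "a = 0" by (rule poly_mapping_eqI) (metis 1(1) off lookup_zero)
    moreover have "b = Poly_Mapping.single i 1"
      by (rule poly_mapping_eqI) (metis 1(2) off lookup_single_eq lookup_single_not_eq)
    ultimately show ?thesis by simp
  next
    case 2
    have "b = 0" by (rule poly_mapping_eqI) (metis 2(2) off lookup_zero)
    moreover have "a = Poly_Mapping.single i 1"
      by (rule poly_mapping_eqI) (metis 2(1) off lookup_single_eq lookup_single_not_eq)
    ultimately show ?thesis by simp
  qed
qed auto

lemma lookup_mult_single_one:
  fixes p q :: "('a \<Rightarrow>\<^sub>0 nat) \<Rightarrow>\<^sub>0 'b::comm_semiring_1" and i :: 'a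
  defines "\<mu> \<equiv> Poly_Mapping.single i 1"
  shows "Poly_Mapping.lookup (p * q) \<mu> =
    Poly_Mapping.lookup p \<mu> * Poly_Mapping.lookup q 0 + Poly_Mapping.lookup p 0 * Poly_Mapping.lookup q \<mu>"
proof -
  let ?F = "\<lambda>(a, b). Poly_Mapping.lookup p a * Poly_Mapping.lookup q b when \<mu> = a + b"
  have "\<mu> \<noteq> 0" unfolding \<mu>_def by (metis lookup_single_eq lookup_zero one_neq_zero)
  moreover have "{x. ?F x \<noteq> 0} \<subseteq> {(0, \<mu>), (\<mu>, 0)}"
  proof
    fix x assume "x \<in> {x. ?F x \<noteq> 0}"
    then obtain a b where "x = (a, b)" "a + b = \<mu>"
      by (cases x) (auto simp: when_def split: if_splits)
    then show "x \<in> {(0, \<mu>), (\<mu>, 0)}"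
      using add_eq_single_one_iff[of a b i] unfolding \<mu>_def by auto
  qed
  ultimately have "Sum_any ?F = ?F (0, \<mu>) + ?F (\<mu>, 0)"
    by (subst Sum_any.expand_superset[of "{(0, \<mu>), (\<mu>, 0)}"]) auto
  moreover have "Poly_Mapping.lookup (p * q) \<mu> = Sum_any ?F"
    by transfer (simp add: prod_fun_unfold_prod)
  ultimately show ?thesis by (simp add: add.commute)
qed

definition eval_monomial :: "(nat \<Rightarrow> 'a::comm_ring_1) \<Rightarrow> monomial \<Rightarrow> 'a" where
  "eval_monomial c m = (\<Prod>k\<in>Poly_Mapping.keys m. c (k + 1) ^ Poly_Mapping.lookup m k)"

lemma eval_monomial_superset:
  assumes "finite K" "Poly_Mapping.keys m \<subseteq> K"
  shows "eval_monomial c m = (\<Prod>k\<in>K. c (k + 1) ^ Poly_Mapping.lookup m k)"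
  unfolding eval_monomial_def
  by (rule prod.mono_neutral_left) (use assms in \<open>auto simp: in_keys_iff\<close>)

lemma eval_monomial_add: "eval_monomial c (m1 + m2) = eval_monomial c m1 * eval_monomial c m2"
proof -
  let ?K = "Poly_Mapping.keys m1 \<union> Poly_Mapping.keys m2"
  have "eval_monomial c (m1 + m2) = (\<Prod>k\<in>?K. c (k + 1) ^ Poly_Mapping.lookup (m1 + m2) k)"
    by (rule eval_monomial_superset) (auto simp: keys_add[of m1 m2])
  also have "\<dots> = (\<Prod>k\<in>?K. c (k + 1) ^ Poly_Mapping.lookup m1 k) *
                  (\<Prod>k\<in>?K. c (k + 1) ^ Poly_Mapping.lookup m2 k)"
    by (simp add: lookup_add power_add prod.distrib)
  also have "\<dots> = eval_monomial c m1 * eval_monomial c m2"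
    by (subst (1 2) eval_monomial_superset[of ?K]) auto
  finally show ?thesis .
qed

lemma eval_monomial_single_one: "eval_monomial c (Poly_Mapping.single i 1) = c (i + 1)"
  by (simp add: eval_monomial_def)

context
  fixes \<phi> :: "rat \<Rightarrow> 'a::comm_ring_1"
  assumes hom_one: "\<phi> 1 = 1"
    and hom_add: "\<And>x y. \<phi> (x + y) = \<phi> x + \<phi> y"
begin

lemma hom_zero: "\<phi> 0 = 0"
  using hom_add[of 0 0] by simp

lemma eval_shift_superset:
  assumes "finite K" "Poly_Mapping.keys p \<subseteq> K"
  shows "eval_shift \<phi> c p = (\<Sum>m\<in>K. \<phi> (Poly_Mapping.lookup p m) * eval_monomial c m)"
  unfolding eval_shift_def eval_monomial_def[symmetric]
  by (rule sum.mono_neutral_left) (use assms in \<open>auto simp: in_keys_iff hom_zero\<close>)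

lemma eval_shift_add: "eval_shift \<phi> c (p + q) = eval_shift \<phi> c p + eval_shift \<phi> c q"
proof -
  let ?K = "Poly_Mapping.keys p \<union> Poly_Mapping.keys q"
  have "eval_shift \<phi> c (p + q) = (\<Sum>m\<in>?K. \<phi> (Poly_Mapping.lookup (p + q) m) * eval_monomial c m)"
    by (rule eval_shift_superset) (auto simp: keys_add[of p q])
  also have "\<dots> = (\<Sum>m\<in>?K. \<phi> (Poly_Mapping.lookup p m) * eval_monomial c m) +
                  (\<Sum>m\<in>?K. \<phi> (Poly_Mapping.lookup q m) * eval_monomial c m)"
    by (simp add: lookup_add hom_add distrib_right sum.distrib)
  also have "\<dots> = eval_shift \<phi> c p + eval_shift \<phi> c q"
    by (subst (1 2) eval_shift_superset[of ?K]) auto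
  finally show ?thesis .
qed

lemma eval_shift_sum: "eval_shift \<phi> c (\<Sum>i\<in>I. f i) = (\<Sum>i\<in>I. eval_shift \<phi> c (f i))"
proof (induction I rule: infinite_finite_induct)
  case (insert x F)
  then show ?case by (simp add: eval_shift_add)
qed (simp_all add: eval_shift_def)

lemma eval_shift_single: "eval_shift \<phi> c (Poly_Mapping.single m r) = \<phi> r * eval_monomial c m"
  by (cases "r = 0") (simp_all add: eval_shift_def eval_monomial_def hom_zero)

lemma eval_shift_Var_mult: "eval_shift \<phi> c (Var i * Var k) = c (i + 1) * c (k + 1)"
  by (simp only: Var_def mult_single eval_shift_single hom_one eval_monomial_add
      eval_monomial_single_one mult_1)

lemma eval_shift_convolution:
  "eval_shift \<phi> c (\<Sum>i = 0..m. Var i * Var (m - i)) = (\<Sum>i = 1..m + 1. c i * c (m + 2 - i))"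
proof -
  have "eval_shift \<phi> c (\<Sum>i = 0..m. Var i * Var (m - i)) = (\<Sum>i = 0..m. c (i + 1) * c (m - i + 1))"
    by (simp only: eval_shift_sum eval_shift_Var_mult)
  also have "\<dots> = (\<Sum>i = 0..m. c (Suc i) * c (m + 2 - Suc i))"
    by (intro sum.cong refl) (simp add: Suc_diff_le)
  also have "\<dots> = (\<Sum>i = 1..m + 1. c i * c (m + 2 - i))"
    by (simp only: One_nat_def add_Suc_right add_0_right sum.shift_bounds_cl_Suc_ivl)
  finally show ?thesis .
qed

end

section \<open>The case \<open>j = 1\<close> determines \<open>S\<^sub>0(n)\<close>\<close>

abbreviation A_fps :: "qpoly fps" where
  "A_fps \<equiv> 1 + a_fps * fps_X ^ 2"

lemma fps_nth_a_fps [simp]: "a_fps $ k = Var k"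
  by (simp add: a_fps_def)

lemma F_fps_one: "F_fps 1 = a_fps * A_fps"
proof -
  have "fps_shift 2 (a_fps * fps_X ^ 2) = a_fps"
    by (rule fps_ext) (simp add: fps_X_power_mult_right_nth)
  then show ?thesis
    by (simp add: F_fps_def G_fps_def H_fps_def fps_lr_inverse_one_one)
qed

lemma F_fps_one_nth:
  assumes "n \<ge> 3"
  shows "F_fps 1 $ (n - 1) = Var (n - 1) + (\<Sum>i = 0..n - 3. Var i * Var (n - 3 - i))"
proof -
  have "F_fps 1 = a_fps + (a_fps * a_fps) * fps_X ^ 2"
    unfolding F_fps_one by (simp add: distrib_left mult.assoc)
  moreover have "((a_fps * a_fps) * fps_X ^ 2) $ (n - 1) = (a_fps * a_fps) $ (n - 3)"
    using assms by (simp add: fps_X_power_mult_right_nth numeral_3_eq_3)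
  ultimately show ?thesis
    by (simp add: fps_mult_nth)
qed

lemma S_prop_zero:
  assumes "S_prop n T" "n \<ge> 3"
  shows "T 0 = (\<Sum>i = 0..n - 3. Var i * Var (n - 3 - i))"
proof -
  have "F_fps 1 $ (n - 1) = Var (n - 1) + T 0 + (\<Sum>i = 1..n. T i * 0 ^ i)"
    using assms(1) unfolding S_prop_def by auto
  also have "(\<Sum>i = 1..n. T i * 0 ^ i) = 0"
    by (rule sum.neutral) auto
  finally show ?thesis
    using F_fps_one_nth[OF assms(2)] by simp
qed

lemma qpoly_power_sum_eq_zero_imp_coeff_eq_zero:
  fixes D :: "nat \<Rightarrow> qpoly"
  assumes "infinite X" and vanish: "\<And>x. x \<in> X \<Longrightarrow> (\<Sum>i\<le>n. D i * of_nat x ^ i) = 0"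
    and "i \<le> n"
  shows "D i = 0"
proof (rule poly_mapping_eqI)
  fix \<mu>
  define P :: "rat poly" where "P = (\<Sum>i\<le>n. monom (Poly_Mapping.lookup (D i) \<mu>) i)"
  have "poly P (of_nat x) = 0" if "x \<in> X" for x
  proof -
    have lookup_power: "Poly_Mapping.lookup (q * of_nat x ^ k) \<mu> = Poly_Mapping.lookup q \<mu> * of_nat x ^ k"
      for q :: qpoly and k
    proof -
      have "Poly_Mapping.lookup (q * of_nat x ^ k) \<mu> = Poly_Mapping.lookup (of_nat (x ^ k) * q) \<mu>"
        by (simp only: of_nat_power mult.commute)
      also have "\<dots> = of_nat (x ^ k) * Poly_Mapping.lookup q \<mu>"
        by (rule lookup_of_nat_mult)
      finally show ?thesis by (simp add: mult.commute)
    qed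
    have "poly P (of_nat x) = Poly_Mapping.lookup (\<Sum>i\<le>n. D i * of_nat x ^ i) \<mu>"
      by (simp add: P_def poly_sum poly_monom lookup_sum lookup_power)
    then show ?thesis using vanish[OF that] by simp
  qed
  then have "of_nat ` X \<subseteq> {r. poly P r = 0}" by auto
  moreover have "infinite (of_nat ` X :: rat set)"
    using assms(1) by (simp add: finite_image_iff)
  ultimately have "P = 0" using poly_roots_finite finite_subset by blast
  then have "coeff P i = 0" by simp
  then show "Poly_Mapping.lookup (D i) \<mu> = Poly_Mapping.lookup 0 \<mu>"
    using \<open>i \<le> n\<close> by (simp add: P_def coeff_sum coeff_monom)
qed

lemma S_prop_atMost:
  assumes "S_prop n T" "j > 0"
  shows "F_fps j $ (n - 1) = of_nat (2 * j - 1) * (Var (n - 1) + (\<Sum>i\<le>n. T i * of_nat (j * (j - 1)) ^ i))"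
proof -
  have "(\<Sum>i\<le>n. T i * of_nat (j * (j - 1)) ^ i) = T 0 + (\<Sum>i = 1..n. T i * of_nat (j * (j - 1)) ^ i)"
    by (simp add: atMost_atLeast0 sum.atLeast_Suc_atMost[of 0 n, simplified])
  then show ?thesis
    using assms unfolding S_prop_def by (simp add: add.assoc)
qed

lemma infinite_pronic: "infinite {j * (j - 1) | j :: nat. j > 0}"
  unfolding infinite_nat_iff_unbounded_le
proof
  fix m
  have "Suc m * m = Suc m * (Suc m - 1) \<and> Suc m > 0"
    by simp
  then have "Suc m * m \<in> {j * (j - 1) | j :: nat. j > 0}"
    by blast
  moreover have "m \<le> Suc m * m"
    by simp
  ultimately show "\<exists>x\<ge>m. x \<in> {j * (j - 1) | j :: nat. j > 0}"
    by blast
qed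

lemma S_prop_unique:
  assumes "S_prop n T1" "S_prop n T2"
  shows "T1 = T2"
proof
  fix i
  let ?X = "{j * (j - 1) | j :: nat. j > 0}"
  have vanish: "(\<Sum>i\<le>n. (T1 i - T2 i) * of_nat x ^ i) = 0" if "x \<in> ?X" for x
  proof -
    obtain j where j: "j > 0" "x = j * (j - 1)" using \<open>x \<in> ?X\<close> by blast
    have "(of_nat (2 * j - 1) :: qpoly) \<noteq> 0"
      by (simp only: of_nat_eq_0_iff) (use j(1) in linarith)
    moreover have "of_nat (2 * j - 1) * (Var (n - 1) + (\<Sum>i\<le>n. T1 i * of_nat x ^ i)) =
                   of_nat (2 * j - 1) * (Var (n - 1) + (\<Sum>i\<le>n. T2 i * of_nat x ^ i))"
      using S_prop_atMost[OF assms(1) j(1)] S_prop_atMost[OF assms(2) j(1)]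
      unfolding j(2) by (rule trans[OF sym])
    ultimately have "Var (n - 1) + (\<Sum>i\<le>n. T1 i * of_nat x ^ i) =
                     Var (n - 1) + (\<Sum>i\<le>n. T2 i * of_nat x ^ i)"
      by (rule mult_left_cancel[THEN iffD1])
    then have "(\<Sum>i\<le>n. T1 i * of_nat x ^ i) = (\<Sum>i\<le>n. T2 i * of_nat x ^ i)"
      by (rule add_left_imp_eq)
    then show ?thesis by (simp add: left_diff_distrib sum_subtractf)
  qed
  have "T1 i - T2 i = 0" if "i \<le> n"
    by (rule qpoly_power_sum_eq_zero_imp_coeff_eq_zero[OF infinite_pronic vanish that])
  then show "T1 i = T2 i"
    using assms unfolding S_prop_def by (cases "i \<le> n") auto
qed

section \<open>Polynomial functions on the integers\<close>

lemma int_fun_eq_if_shift_invariant: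
  assumes "\<And>j. h (j + 1) = h j"
  shows "h j = h (0 :: int)"
proof (induction j rule: int_induct[where k = 0])
  case (step1 i)
  then show ?case using assms[of i] by simp
next
  case (step2 i)
  then show ?case using assms[of "i - 1"] by simp
qed simp

definition int_polyfun :: "nat \<Rightarrow> (int \<Rightarrow> qpoly) \<Rightarrow> bool" where
  "int_polyfun d f \<longleftrightarrow> (\<exists>p. degree p \<le> d \<and> (\<forall>j. f j = poly p (of_int j)))"

lemma int_polyfun_const: "int_polyfun d (\<lambda>j. c)"
  unfolding int_polyfun_def by (rule exI[of _ "[:c:]"]) simp

lemma int_polyfun_mono: "int_polyfun d f \<Longrightarrow> d \<le> d' \<Longrightarrow> int_polyfun d' f"
  unfolding int_polyfun_def by (meson order_trans)

lemma int_polyfun_add: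
  "int_polyfun d f \<Longrightarrow> int_polyfun d g \<Longrightarrow> int_polyfun d (\<lambda>j. f j + g j)"
  unfolding int_polyfun_def
proof (elim exE conjE)
  fix p q
  assume "degree p \<le> d" "\<forall>j. f j = poly p (of_int j)" "degree q \<le> d" "\<forall>j. g j = poly q (of_int j)"
  then show "\<exists>r. degree r \<le> d \<and> (\<forall>j. f j + g j = poly r (of_int j))"
    by (intro exI[of _ "p + q"]) (auto intro: order_trans[OF degree_add_le])
qed

lemma int_polyfun_uminus: "int_polyfun d f \<Longrightarrow> int_polyfun d (\<lambda>j. - f j)"
  unfolding int_polyfun_def by (metis degree_minus poly_minus)

lemma int_polyfun_diff:
  "int_polyfun d f \<Longrightarrow> int_polyfun d g \<Longrightarrow> int_polyfun d (\<lambda>j. f j - g j)"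
  using int_polyfun_add[of d f "\<lambda>j. - g j"] int_polyfun_uminus[of d g] by simp

lemma int_polyfun_mult:
  "int_polyfun d1 f \<Longrightarrow> int_polyfun d2 g \<Longrightarrow> int_polyfun (d1 + d2) (\<lambda>j. f j * g j)"
  unfolding int_polyfun_def
proof (elim exE conjE)
  fix p q
  assume "degree p \<le> d1" "\<forall>j. f j = poly p (of_int j)" "degree q \<le> d2" "\<forall>j. g j = poly q (of_int j)"
  then show "\<exists>r. degree r \<le> d1 + d2 \<and> (\<forall>j. f j * g j = poly r (of_int j))"
    by (intro exI[of _ "p * q"]) (auto intro: order_trans[OF degree_mult_le])
qed

lemma int_polyfun_sum:
  "(\<And>i. i \<in> I \<Longrightarrow> int_polyfun d (f i)) \<Longrightarrow> int_polyfun d (\<lambda>j. \<Sum>i\<in>I. f i j)"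
  by (induction I rule: infinite_finite_induct) (simp_all add: int_polyfun_const int_polyfun_add)

lemma int_polyfun_of_int: "int_polyfun 1 of_int"
  unfolding int_polyfun_def by (rule exI[of _ "[:0, 1:]"]) simp

lemma int_polyfun_compose_affine: "int_polyfun d f \<Longrightarrow> int_polyfun d (\<lambda>j. f (a + b * j))"
  unfolding int_polyfun_def
proof (elim exE conjE)
  fix p assume p: "degree p \<le> d" "\<forall>j. f j = poly p (of_int j)"
  let ?q = "[:of_int a, of_int b:] :: qpoly poly"
  let ?r = "pcompose p ?q"
  have "degree ?r \<le> degree p * degree ?q"
    by (rule degree_pcompose_le)
  also have "\<dots> \<le> d"
  proof -
    have "degree ?q \<le> 1" by (simp add: degree_pCons_le)
    then show ?thesis using p(1) by (metis mult.right_neutral mult_le_mono order_trans)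
  qed
  finally have "degree ?r \<le> d" .
  moreover have "\<forall>j. f (a + b * j) = poly ?r (of_int j)"
    using p(2) by (simp add: poly_pcompose algebra_simps)
  ultimately show "\<exists>r. degree r \<le> d \<and> (\<forall>j. f (a + b * j) = poly r (of_int j))" by blast
qed

text \<open>Faulhaber: \<open>(x + 1)\<^sup>k\<^sup>+\<^sup>1 - x\<^sup>k\<^sup>+\<^sup>1\<close> is \<open>(k + 1) x\<^sup>k\<close> plus lower powers, which are
  differences by induction; dividing by \<open>k + 1\<close> needs the rational coefficients.\<close>

lemma exists_poly_forward_difference_power:
  "\<exists>P :: qpoly poly. degree P \<le> k + 1 \<and> (\<forall>x. poly P (x + 1) - poly P x = x ^ k)"
proof (induction k rule: less_induct)
  case (less k)
  then have "\<forall>i. \<exists>Q :: qpoly poly. i < k \<longrightarrow>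
      degree Q \<le> i + 1 \<and> (\<forall>x. poly Q (x + 1) - poly Q x = x ^ i)"
    by blast
  then obtain Q :: "nat \<Rightarrow> qpoly poly" where
    Q: "\<And>i. i < k \<Longrightarrow> degree (Q i) \<le> i + 1 \<and> (\<forall>x. poly (Q i) (x + 1) - poly (Q i) x = x ^ i)"
    by (metis choice)
  define P where "P = smult (Poly_Mapping.single 0 (1 / of_nat (k + 1)))
      (monom 1 (k + 1) - (\<Sum>i<k. smult (of_nat ((k + 1) choose i)) (Q i)))"
  have "degree (\<Sum>i<k. smult (of_nat ((k + 1) choose i)) (Q i)) \<le> k + 1"
  proof (rule degree_sum_le)
    fix i assume "i \<in> {..<k}"
    then have "degree (Q i) \<le> k + 1" using Q[of i] by simp
    then show "degree (smult (of_nat ((k + 1) choose i)) (Q i)) \<le> k + 1"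
      by (rule order_trans[OF degree_smult_le])
  qed simp
  then have "degree P \<le> k + 1"
    unfolding P_def
    by (intro order_trans[OF degree_smult_le] degree_diff_le) (auto intro: order_trans[OF degree_monom_le])
  moreover have "poly P (x + 1) - poly P x = x ^ k" for x
  proof -
    let ?s = "Poly_Mapping.single 0 (1 / of_nat (k + 1)) :: qpoly"
    have binomial: "(x + 1) ^ (k + 1) =
        (\<Sum>i<k. of_nat ((k + 1) choose i) * x ^ i) + of_nat (k + 1) * x ^ k + x ^ (k + 1)"
      unfolding binomial_ring[of x 1 "k + 1"]
      by (simp add: lessThan_Suc_atMost[symmetric] algebra_simps)
    have "poly P (x + 1) - poly P x = ?s * ((x + 1) ^ (k + 1) - x ^ (k + 1) -
        (\<Sum>i<k. of_nat ((k + 1) choose i) * (poly (Q i) (x + 1) - poly (Q i) x)))"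
      by (simp add: P_def poly_sum poly_monom algebra_simps sum_subtractf)
    also have "\<dots> = ?s * ((x + 1) ^ (k + 1) - x ^ (k + 1) -
        (\<Sum>i<k. of_nat ((k + 1) choose i) * x ^ i))"
      using Q by simp
    also have "\<dots> = ?s * of_nat (k + 1) * x ^ k"
      unfolding binomial by (simp add: algebra_simps)
    finally show ?thesis
      using single_zero_inverse_mult_of_nat[of "k + 1"] by simp
  qed
  ultimately show ?case by blast
qed

lemma int_polyfun_antidifference:
  assumes g: "int_polyfun d g" and f: "\<And>j. f (j + 1) - f j = g j"
  shows "int_polyfun (d + 1) f"
proof -
  obtain q where q: "degree q \<le> d" "\<And>j. g j = poly q (of_int j)"
    using g unfolding int_polyfun_def by blast
  have "\<forall>k. \<exists>P :: qpoly poly. degree P \<le> k + 1 \<and> (\<forall>x. poly P (x + 1) - poly P x = x ^ k)"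
    using exists_poly_forward_difference_power by blast
  then obtain P :: "nat \<Rightarrow> qpoly poly" where
    P: "\<And>k. degree (P k) \<le> k + 1" "\<And>k x. poly (P k) (x + 1) - poly (P k) x = x ^ k"
    by (metis choice)
  define F where "F = (\<Sum>k\<le>d. smult (coeff q k) (P k))"
  have deg_F: "degree F \<le> d + 1"
    unfolding F_def using P(1)
    by (intro degree_sum_le) (auto intro: order_trans[OF degree_smult_le] order_trans)
  have "poly F (x + 1) - poly F x = (\<Sum>k\<le>d. coeff q k * x ^ k)" for x
    by (simp add: F_def poly_sum P(2) flip: right_diff_distrib sum_subtractf)
  also have "(\<Sum>k\<le>d. coeff q k * x ^ k) = poly q x" for x
    by (simp add: poly_altdef) (rule sum.mono_neutral_right, use q(1) in \<open>auto simp: coeff_eq_0\<close>)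
  finally have difference: "poly F (x + 1) - poly F x = poly q x" for x .
  have "f (j + 1) - poly F (of_int (j + 1)) = f j - poly F (of_int j)" for j
    using f[of j] q(2)[of j] difference[of "of_int j"] by (simp add: algebra_simps)
  then have "f j - poly F (of_int j) = f 0 - poly F 0" for j
    using int_fun_eq_if_shift_invariant[of "\<lambda>j. f j - poly F (of_int j)"] by simp
  then have "\<forall>j. f j = poly (F + [:f 0 - poly F 0:]) (of_int j)"
    by (simp add: algebra_simps)
  moreover have "degree (F + [:f 0 - poly F 0:]) \<le> d + 1"
    using deg_F by (intro order_trans[OF degree_add_le]) auto
  ultimately show ?thesis
    unfolding int_polyfun_def by blast
qed

section \<open>\<open>G\<close> and \<open>H\<close> as one family over the integers\<close>

definition A_inv :: "qpoly fps" where
  "A_inv = fps_right_inverse A_fps 1"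

lemma A_inv_mult_A_fps: "A_inv * A_fps = 1"
  unfolding A_inv_def by (subst mult.commute) (rule fps_right_inverse, simp)

definition A_pow :: "int \<Rightarrow> qpoly fps" where
  "A_pow j = (if 0 \<le> j then A_fps ^ nat j else A_inv ^ nat (- j))"

lemma A_pow_succ: "A_pow (j + 1) = A_pow j * A_fps"
proof (cases "0 \<le> j")
  case True
  then have "nat (j + 1) = Suc (nat j)" by simp
  then show ?thesis using True by (simp add: A_pow_def mult.commute)
next
  case False
  define m where "m = nat (- (j + 1))"
  have "nat (- j) = Suc m" using False by (simp add: m_def)
  then have "A_pow j * A_fps = A_inv ^ m"
    using False by (simp add: A_pow_def mult.assoc A_inv_mult_A_fps)
  moreover have "A_pow (j + 1) = A_inv ^ m"
    using False by (cases "j + 1 = 0") (auto simp: A_pow_def m_def)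
  ultimately show ?thesis by simp
qed

definition L_fps :: "int \<Rightarrow> qpoly fps" where
  "L_fps i = 1 + of_int i * fps_X"

definition L_inv :: "int \<Rightarrow> qpoly fps" where
  "L_inv i = fps_right_inverse (L_fps i) 1"

lemma L_inv_mult_L_fps: "L_inv i * L_fps i = 1"
  unfolding L_inv_def by (subst mult.commute) (rule fps_right_inverse, simp add: L_fps_def)

definition Q_fps :: "int \<Rightarrow> qpoly fps" where
  "Q_fps j = (if 0 \<le> j then (\<Prod>i\<in>{0..<nat j}. L_inv (int i)) else (\<Prod>i\<in>{j..-1}. L_fps i))"

lemma Q_fps_eq_Q_fps_succ_mult: "Q_fps j = Q_fps (j + 1) * L_fps j"
proof (cases "0 \<le> j")
  case True
  then have "nat (j + 1) = Suc (nat j)" by simp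
  then have "Q_fps (j + 1) = Q_fps j * L_inv j" using True by (simp add: Q_fps_def)
  then show ?thesis by (simp add: mult.assoc L_inv_mult_L_fps)
next
  case False
  then consider "j = -1" | "{j..-1} = insert j {j + 1..-1}" "j + 1 < 0" by fastforce
  then show ?thesis
  proof cases
    case 2
    then show ?thesis using False by (simp add: Q_fps_def mult.commute)
  qed (simp add: Q_fps_def)
qed

lemma A_pow_nth_zero: "A_pow j $ 0 = 1"
  by (simp add: A_pow_def fps_nth_power_0 A_inv_def)

lemma Q_fps_nth_zero: "Q_fps j $ 0 = 1"
proof -
  have "Q_fps (j + 1) $ 0 = Q_fps j $ 0" for j
    by (subst (2) Q_fps_eq_Q_fps_succ_mult) (simp add: L_fps_def)
  then have "Q_fps j $ 0 = Q_fps 0 $ 0" by (rule int_fun_eq_if_shift_invariant)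
  then show ?thesis by (simp add: Q_fps_def)
qed

definition G_int :: "int \<Rightarrow> qpoly fps" where
  "G_int j = A_pow j * Q_fps j"

lemma G_fps_eq_G_int: "G_fps j = G_int (int j)"
proof -
  have "G_fps j = A_fps ^ j * (\<Prod>i\<in>{0..<j}. L_inv (int i))"
    by (simp add: G_fps_def prod.distrib L_inv_def L_fps_def)
  then show ?thesis by (simp add: G_int_def A_pow_def Q_fps_def)
qed

lemma H_fps_eq_G_int:
  assumes "j > 0"
  shows "H_fps j = G_int (1 - int j)"
proof -
  have "H_fps j = (\<Prod>i\<in>{1 - int j..-1}. L_fps i) * A_inv ^ (j - 1)"
    by (simp add: H_fps_def prod.distrib L_fps_def A_inv_def nat_diff_distrib')
  moreover have "G_int (1 - int j) = A_inv ^ (j - 1) * (\<Prod>i\<in>{1 - int j..-1}. L_fps i)"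
  proof (cases "j = 1")
    case False
    then have "1 - int j < 0" "nat (- (1 - int j)) = j - 1" using assms by auto
    then show ?thesis by (simp add: G_int_def A_pow_def Q_fps_def)
  qed (simp add: G_int_def A_pow_def Q_fps_def)
  ultimately show ?thesis by (simp add: mult.commute)
qed

lemma int_polyfun_A_pow_nth: "int_polyfun (2 * m) (\<lambda>j. A_pow j $ m)"
proof (induction m rule: less_induct)
  case (less m)
  show ?case
  proof (cases "m = 0")
    case True
    then show ?thesis by (simp add: A_pow_nth_zero int_polyfun_const)
  next
    case False
    have "int_polyfun (2 * m - 1) (\<lambda>j. \<Sum>i = 0..m. A_pow j $ i * (a_fps * fps_X ^ 2) $ (m - i))"
    proof (rule int_polyfun_sum)
      fix i assume i: "i \<in> {0..m}"
      show "int_polyfun (2 * m - 1) (\<lambda>j. A_pow j $ i * (a_fps * fps_X ^ 2) $ (m - i))"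
      proof (cases "i = m")
        case True
        then show ?thesis by (simp add: fps_X_power_mult_right_nth int_polyfun_const)
      next
        case False
        then have "int_polyfun (2 * i + 0) (\<lambda>j. A_pow j $ i * (a_fps * fps_X ^ 2) $ (m - i))"
          using less i by (intro int_polyfun_mult int_polyfun_const) auto
        then show ?thesis by (rule int_polyfun_mono) (use False i in auto)
      qed
    qed
    moreover have "A_pow (j + 1) $ m - A_pow j $ m =
        (\<Sum>i = 0..m. A_pow j $ i * (a_fps * fps_X ^ 2) $ (m - i))" for j
      by (simp add: A_pow_succ distrib_left fps_mult_nth)
    ultimately have "int_polyfun (2 * m - 1 + 1) (\<lambda>j. A_pow j $ m)"
      by (rule int_polyfun_antidifference)
    then show ?thesis using False by simp
  qed
qed

lemma int_polyfun_Q_fps_nth: "int_polyfun (2 * m) (\<lambda>j. Q_fps j $ m)"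
proof (induction m)
  case 0
  then show ?case by (simp add: Q_fps_nth_zero int_polyfun_const)
next
  case (Suc m)
  have "int_polyfun (1 + 2 * m) (\<lambda>j. of_int j * Q_fps (1 + 1 * j) $ m)"
    by (rule int_polyfun_mult[OF int_polyfun_of_int int_polyfun_compose_affine[OF Suc]])
  then have "int_polyfun (2 * m + 1) (\<lambda>j. - (of_int j * Q_fps (j + 1) $ m))"
    by (intro int_polyfun_uminus) (simp add: add.commute)
  moreover have "Q_fps (j + 1) $ Suc m - Q_fps j $ Suc m = - (of_int j * Q_fps (j + 1) $ m)" for j
  proof -
    have "Q_fps j = Q_fps (j + 1) + fps_const (of_int j) * (fps_X * Q_fps (j + 1))"
      by (subst Q_fps_eq_Q_fps_succ_mult)
        (simp add: L_fps_def distrib_left fps_of_int mult.commute mult.left_commute)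
    then show ?thesis by simp
  qed
  ultimately have "int_polyfun (2 * m + 1 + 1) (\<lambda>j. Q_fps j $ Suc m)"
    by (rule int_polyfun_antidifference)
  then show ?case by simp
qed

lemma int_polyfun_G_int_nth: "int_polyfun (2 * m) (\<lambda>j. G_int j $ m)"
proof -
  have "int_polyfun (2 * m) (\<lambda>j. \<Sum>i = 0..m. A_pow j $ i * Q_fps j $ (m - i))"
  proof (rule int_polyfun_sum)
    fix i assume "i \<in> {0..m}"
    then have "2 * i + 2 * (m - i) = 2 * m" by simp
    then show "int_polyfun (2 * m) (\<lambda>j. A_pow j $ i * Q_fps j $ (m - i))"
      using int_polyfun_mult[OF int_polyfun_A_pow_nth[of i] int_polyfun_Q_fps_nth[of "m - i"]]
      by simp
  qed
  then show ?thesis by (simp add: G_int_def fps_mult_nth)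
qed

definition F_int :: "nat \<Rightarrow> int \<Rightarrow> qpoly" where
  "F_int n j = (fps_shift 2 (G_int j - G_int (1 - j)) * A_fps) $ (n - 1)"

lemma F_fps_nth_eq_F_int: "j > 0 \<Longrightarrow> F_fps j $ (n - 1) = F_int n (int j)"
  by (simp add: F_fps_def F_int_def G_fps_eq_G_int H_fps_eq_G_int)

lemma F_int_eq_sum:
  "F_int n j = (\<Sum>i = 0..n - 1. (G_int j $ (i + 2) - G_int (1 - j) $ (i + 2)) * A_fps $ (n - 1 - i))"
  by (simp add: F_int_def fps_mult_nth)

lemma F_int_reflect: "F_int n (1 - j) = - F_int n j"
proof -
  have "fps_shift 2 (G_int (1 - j) - G_int (1 - (1 - j))) = - fps_shift 2 (G_int j - G_int (1 - j))"
    by (rule fps_ext) simp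
  then show ?thesis unfolding F_int_def by simp
qed

lemma int_polyfun_F_int:
  assumes "n \<ge> 1"
  shows "int_polyfun (2 * n + 2) (F_int n)"
proof -
  have "int_polyfun (2 * n + 2)
      (\<lambda>j. \<Sum>i = 0..n - 1. (G_int j $ (i + 2) - G_int (1 - j) $ (i + 2)) * A_fps $ (n - 1 - i))"
  proof (rule int_polyfun_sum)
    fix i assume i: "i \<in> {0..n - 1}"
    have "int_polyfun (2 * (i + 2)) (\<lambda>j. G_int (1 + (-1) * j) $ (i + 2))"
      by (rule int_polyfun_compose_affine[OF int_polyfun_G_int_nth])
    then have "int_polyfun (2 * (i + 2)) (\<lambda>j. G_int j $ (i + 2) - G_int (1 - j) $ (i + 2))"
      by (intro int_polyfun_diff int_polyfun_G_int_nth) simp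
    then have "int_polyfun (2 * (i + 2) + 0)
        (\<lambda>j. (G_int j $ (i + 2) - G_int (1 - j) $ (i + 2)) * A_fps $ (n - 1 - i))"
      by (rule int_polyfun_mult[OF _ int_polyfun_const])
    then show "int_polyfun (2 * n + 2)
        (\<lambda>j. (G_int j $ (i + 2) - G_int (1 - j) $ (i + 2)) * A_fps $ (n - 1 - i))"
      by (rule int_polyfun_mono) (use i \<open>n \<ge> 1\<close> in auto)
  qed
  then show ?thesis by (simp add: F_int_eq_sum[abs_def])
qed

section \<open>Functions of \<open>j\<close> invariant or odd under \<open>j \<mapsto> 1 - j\<close>\<close>

definition v_int :: "int \<Rightarrow> qpoly" where
  "v_int j = of_int (j * (j - 1))"

definition u_int :: "int \<Rightarrow> qpoly" where
  "u_int j = of_int (2 * j - 1)"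

lemma u_int_square: "u_int j * u_int j = poly [:1, 4:] (v_int j)"
proof -
  have "(2 * j - 1) * (2 * j - 1) = 1 + 4 * (j * (j - 1))" by algebra
  then have "(of_int ((2 * j - 1) * (2 * j - 1)) :: qpoly) = of_int (1 + 4 * (j * (j - 1)))" by simp
  then show ?thesis unfolding u_int_def v_int_def by (simp add: algebra_simps)
qed

lemma v_int_reflect: "v_int (1 - j) = v_int j"
  unfolding v_int_def by (simp add: algebra_simps)

lemma u_int_reflect: "u_int (1 - j) = - u_int j"
  unfolding u_int_def by (simp add: algebra_simps)

text \<open>\<open>v_degree_le e d P\<close> says that \<open>u\<^sup>e P(v)\<close>, for \<open>e \<le> 1\<close>, has degree at most \<open>d\<close> as a
  polynomial in \<open>j\<close>; \<open>u\<close> and \<open>v\<close> have degrees 1 and 2. Phrased coefficientwise, it holds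
  for the zero polynomial whatever \<open>d\<close> is.\<close>

definition v_degree_le :: "nat \<Rightarrow> nat \<Rightarrow> qpoly poly \<Rightarrow> bool" where
  "v_degree_le e d P \<longleftrightarrow> (\<forall>i. coeff P i \<noteq> 0 \<longrightarrow> 2 * i + e \<le> d)"

lemma v_degree_le_zero: "v_degree_le e d 0"
  by (simp add: v_degree_le_def)

lemma v_degree_le_const: "e \<le> d \<Longrightarrow> v_degree_le e d [:c:]"
  unfolding v_degree_le_def by (simp add: coeff_pCons split: nat.splits)

lemma v_degree_le_mono: "v_degree_le e d P \<Longrightarrow> d \<le> d' \<Longrightarrow> v_degree_le e d' P"
  unfolding v_degree_le_def by (meson order_trans)

lemma v_degree_le_add: "v_degree_le e d P \<Longrightarrow> v_degree_le e d Q \<Longrightarrow> v_degree_le e d (P + Q)"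
  unfolding v_degree_le_def by (metis add.left_neutral coeff_add)

lemma v_degree_le_smult: "v_degree_le e d P \<Longrightarrow> v_degree_le e d (smult c P)"
  unfolding v_degree_le_def by simp

lemma v_degree_le_mult:
  assumes "v_degree_le e1 d1 P" "v_degree_le e2 d2 Q"
  shows "v_degree_le (e1 + e2) (d1 + d2) (P * Q)"
  unfolding v_degree_le_def
proof (intro allI impI)
  fix n assume "coeff (P * Q) n \<noteq> 0"
  then obtain i where i: "i \<le> n" "coeff P i * coeff Q (n - i) \<noteq> 0"
    unfolding coeff_mult by (meson atMost_iff sum.not_neutral_contains_not_neutral)
  then have "2 * i + e1 \<le> d1" "2 * (n - i) + e2 \<le> d2"
    using assms unfolding v_degree_le_def by auto
  then show "2 * n + (e1 + e2) \<le> d1 + d2" using i(1) by linarith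
qed

lemma v_degree_le_u_square_mult:
  assumes "v_degree_le 2 d R"
  shows "v_degree_le 0 d ([:1, 4:] * R)"
  unfolding v_degree_le_def
proof (intro allI impI)
  fix i assume "coeff ([:1, 4:] * R) i \<noteq> 0"
  then have "coeff R i \<noteq> 0 \<or> (i > 0 \<and> coeff R (i - 1) \<noteq> 0)"
    by (cases i) (auto simp: mult_pCons_left)
  then show "2 * i + 0 \<le> d"
  proof
    assume "coeff R i \<noteq> 0"
    then show ?thesis using assms unfolding v_degree_le_def by fastforce
  next
    assume "i > 0 \<and> coeff R (i - 1) \<noteq> 0"
    then have "2 * (i - 1) + 2 \<le> d" "i > 0" using assms unfolding v_degree_le_def by blast+
    then show ?thesis by simp
  qed
qed

definition uv_form :: "nat \<Rightarrow> (int \<Rightarrow> qpoly) \<Rightarrow> bool" where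
  "uv_form d f \<longleftrightarrow> (\<exists>P Q. v_degree_le 0 d P \<and> v_degree_le 1 d Q \<and>
      (\<forall>j. f j = poly P (v_int j) + u_int j * poly Q (v_int j)))"

lemma uv_form_const: "uv_form d (\<lambda>j. c)"
  unfolding uv_form_def
  by (intro exI[of _ "[:c:]"] exI[of _ 0]) (simp add: v_degree_le_const v_degree_le_zero)

lemma uv_form_mono: "uv_form d f \<Longrightarrow> d \<le> d' \<Longrightarrow> uv_form d' f"
  unfolding uv_form_def by (meson v_degree_le_mono)

lemma uv_form_add: "uv_form d f \<Longrightarrow> uv_form d g \<Longrightarrow> uv_form d (\<lambda>j. f j + g j)"
  unfolding uv_form_def
proof (elim exE conjE)
  fix P1 Q1 P2 Q2
  assume "v_degree_le 0 d P1" "v_degree_le 1 d Q1" "\<forall>j. f j = poly P1 (v_int j) + u_int j * poly Q1 (v_int j)"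
    "v_degree_le 0 d P2" "v_degree_le 1 d Q2" "\<forall>j. g j = poly P2 (v_int j) + u_int j * poly Q2 (v_int j)"
  then show "\<exists>P Q. v_degree_le 0 d P \<and> v_degree_le 1 d Q \<and>
      (\<forall>j. f j + g j = poly P (v_int j) + u_int j * poly Q (v_int j))"
    by (intro exI[of _ "P1 + P2"] exI[of _ "Q1 + Q2"]) (simp add: v_degree_le_add algebra_simps)
qed

lemma uv_form_smult: "uv_form d f \<Longrightarrow> uv_form d (\<lambda>j. c * f j)"
  unfolding uv_form_def
proof (elim exE conjE)
  fix P Q
  assume "v_degree_le 0 d P" "v_degree_le 1 d Q" "\<forall>j. f j = poly P (v_int j) + u_int j * poly Q (v_int j)"
  then show "\<exists>P Q. v_degree_le 0 d P \<and> v_degree_le 1 d Q \<and>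
      (\<forall>j. c * f j = poly P (v_int j) + u_int j * poly Q (v_int j))"
    by (intro exI[of _ "smult c P"] exI[of _ "smult c Q"]) (simp add: v_degree_le_smult algebra_simps)
qed

lemma uv_form_mult: "uv_form d1 f \<Longrightarrow> uv_form d2 g \<Longrightarrow> uv_form (d1 + d2) (\<lambda>j. f j * g j)"
  unfolding uv_form_def
proof (elim exE conjE)
  fix P1 Q1 P2 Q2
  assume deg: "v_degree_le 0 d1 P1" "v_degree_le 1 d1 Q1" "v_degree_le 0 d2 P2" "v_degree_le 1 d2 Q2"
    and f: "\<forall>j. f j = poly P1 (v_int j) + u_int j * poly Q1 (v_int j)"
    and g: "\<forall>j. g j = poly P2 (v_int j) + u_int j * poly Q2 (v_int j)"
  let ?P = "P1 * P2 + [:1, 4:] * (Q1 * Q2)"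
  let ?Q = "P1 * Q2 + Q1 * P2"
  have "v_degree_le 0 (d1 + d2) (P1 * P2)"
    using v_degree_le_mult[OF deg(1,3)] by simp
  moreover have "v_degree_le 2 (d1 + d2) (Q1 * Q2)"
    using v_degree_le_mult[OF deg(2,4)] by (simp add: numeral_2_eq_2)
  ultimately have "v_degree_le 0 (d1 + d2) ?P"
    by (intro v_degree_le_add v_degree_le_u_square_mult)
  moreover have "v_degree_le 1 (d1 + d2) ?Q"
    using v_degree_le_mult[OF deg(1,4)] v_degree_le_mult[OF deg(2,3)]
    by (simp add: v_degree_le_add add.commute)
  moreover have "f j * g j = poly ?P (v_int j) + u_int j * poly ?Q (v_int j)" for j
  proof -
    have "f j * g j = poly P1 (v_int j) * poly P2 (v_int j) +
        (u_int j * u_int j) * (poly Q1 (v_int j) * poly Q2 (v_int j)) +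
        u_int j * (poly P1 (v_int j) * poly Q2 (v_int j) + poly Q1 (v_int j) * poly P2 (v_int j))"
      using f g by (simp add: algebra_simps)
    then show ?thesis unfolding u_int_square by (simp only: poly_mult poly_add)
  qed
  ultimately show "\<exists>P Q. v_degree_le 0 (d1 + d2) P \<and> v_degree_le 1 (d1 + d2) Q \<and>
      (\<forall>j. f j * g j = poly P (v_int j) + u_int j * poly Q (v_int j))"
    by blast
qed

lemma uv_form_sum: "(\<And>i. i \<in> I \<Longrightarrow> uv_form d (f i)) \<Longrightarrow> uv_form d (\<lambda>j. \<Sum>i\<in>I. f i j)"
  by (induction I rule: infinite_finite_induct) (simp_all add: uv_form_const uv_form_add)

text \<open>The identity \<open>j = (1 + u)/2\<close>.\<close>

lemma uv_form_of_int: "uv_form 1 of_int"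
  unfolding uv_form_def
proof (intro exI conjI allI)
  let ?h = "Poly_Mapping.single 0 (1 / of_nat 2) :: qpoly"
  show "v_degree_le 0 1 [:?h:]" "v_degree_le 1 1 [:?h:]"
    by (simp_all add: v_degree_le_const)
  fix j
  have "poly [:?h:] (v_int j) + u_int j * poly [:?h:] (v_int j) = ?h * (1 + u_int j)"
    by (simp add: algebra_simps)
  also have "1 + u_int j = of_nat 2 * of_int j"
    by (simp add: u_int_def)
  finally show "of_int j = poly [:?h:] (v_int j) + u_int j * poly [:?h:] (v_int j)"
    using single_zero_inverse_mult_of_nat[of 2] by (simp add: mult.assoc[symmetric])
qed

lemma uv_form_power: "uv_form k (\<lambda>j. of_int j ^ k)"
proof (induction k)
  case 0
  then show ?case by (simp add: uv_form_const)
next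
  case (Suc k)
  then show ?case using uv_form_mult[OF uv_form_of_int Suc] by simp
qed

lemma int_polyfun_imp_uv_form:
  assumes "int_polyfun d f"
  shows "uv_form d f"
proof -
  obtain p where p: "degree p \<le> d" "\<And>j. f j = poly p (of_int j)"
    using assms unfolding int_polyfun_def by blast
  have "uv_form d (\<lambda>j. \<Sum>k\<le>degree p. coeff p k * of_int j ^ k)"
    using p(1) by (intro uv_form_sum uv_form_smult uv_form_mono[OF uv_form_power]) auto
  moreover have "f = (\<lambda>j. \<Sum>k\<le>degree p. coeff p k * of_int j ^ k)"
    by (rule ext) (simp add: p(2) poly_altdef)
  ultimately show ?thesis by simp
qed

lemma uv_form_odd:
  assumes "uv_form d f" and odd: "\<And>j. f (1 - j) = - f j"
  shows "\<exists>Q. v_degree_le 1 d Q \<and> (\<forall>j. f j = u_int j * poly Q (v_int j))"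
proof -
  obtain P Q where Q: "v_degree_le 1 d Q"
    and f: "\<And>j. f j = poly P (v_int j) + u_int j * poly Q (v_int j)"
    using assms(1) unfolding uv_form_def by blast
  have "poly P (v_int j) = 0" for j
  proof -
    have "2 * poly P (v_int j) = f j + f (1 - j)"
      using f[of j] f[of "1 - j"] by (simp add: v_int_reflect u_int_reflect)
    then show ?thesis using odd[of j] by simp
  qed
  then show ?thesis using Q f by auto
qed

section \<open>Weights\<close>

text \<open>Giving \<open>a\<^sub>k\<close> the weight \<open>k + 2\<close> (and \<open>x\<close> the weight 1) makes \<open>1 + a(x) x\<^sup>2\<close> and
  \<open>1 + i x\<close> homogeneous; so the coefficient of \<open>x\<^sup>m\<close> in any series built from them has
  weight at most \<open>m\<close>.\<close>

definition weight :: "monomial \<Rightarrow> nat" where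
  "weight \<mu> = (\<Sum>k\<in>Poly_Mapping.keys \<mu>. (k + 2) * Poly_Mapping.lookup \<mu> k)"

lemma weight_superset:
  assumes "finite K" "Poly_Mapping.keys \<mu> \<subseteq> K"
  shows "weight \<mu> = (\<Sum>k\<in>K. (k + 2) * Poly_Mapping.lookup \<mu> k)"
  unfolding weight_def by (rule sum.mono_neutral_left) (use assms in \<open>auto simp: in_keys_iff\<close>)

lemma weight_add: "weight (\<mu> + \<nu>) = weight \<mu> + weight \<nu>"
proof -
  let ?K = "Poly_Mapping.keys \<mu> \<union> Poly_Mapping.keys \<nu>"
  have "weight (\<mu> + \<nu>) = (\<Sum>k\<in>?K. (k + 2) * Poly_Mapping.lookup (\<mu> + \<nu>) k)"
    by (rule weight_superset) (auto simp: keys_add[of \<mu> \<nu>])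
  also have "\<dots> = (\<Sum>k\<in>?K. (k + 2) * Poly_Mapping.lookup \<mu> k) +
                  (\<Sum>k\<in>?K. (k + 2) * Poly_Mapping.lookup \<nu> k)"
    by (simp add: lookup_add distrib_left sum.distrib)
  also have "\<dots> = weight \<mu> + weight \<nu>"
    by (subst (1 2) weight_superset[of ?K]) auto
  finally show ?thesis .
qed

lemma weight_le_imp_eq_single_one:
  assumes k: "k \<in> Poly_Mapping.keys \<mu>" and le: "weight \<mu> \<le> k + 2"
  shows "\<mu> = Poly_Mapping.single k 1"
proof -
  have pos: "Poly_Mapping.lookup \<mu> x \<ge> 1" if "x \<in> Poly_Mapping.keys \<mu>" for x
    using that by (simp add: in_keys_iff)
  define a where "a = (k + 2) * Poly_Mapping.lookup \<mu> k"
  define r where "r = (\<Sum>x\<in>Poly_Mapping.keys \<mu> - {k}. (x + 2) * Poly_Mapping.lookup \<mu> x)"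
  have "weight \<mu> = a + r"
    unfolding weight_def a_def r_def using k by (simp add: sum.remove)
  moreover have "k + 2 \<le> a"
    unfolding a_def using mult_le_mono2[OF pos[OF k], of "k + 2"] by simp
  ultimately have "a = k + 2" "r = 0"
    using le by linarith+
  then have "(k + 2) * Poly_Mapping.lookup \<mu> k = (k + 2) * 1"
    unfolding a_def by (simp only: mult_1_right)
  then have one: "Poly_Mapping.lookup \<mu> k = 1"
    by (subst (asm) mult_cancel1) simp
  have "Poly_Mapping.keys \<mu> \<subseteq> {k}"
  proof
    fix x assume x: "x \<in> Poly_Mapping.keys \<mu>"
    show "x \<in> {k}"
    proof (rule ccontr)
      assume "x \<notin> {k}"
      then have "(x + 2) * Poly_Mapping.lookup \<mu> x \<le> r"
        unfolding r_def using x by (intro member_le_sum) auto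
      then show False using pos[OF x] \<open>r = 0\<close> by simp
    qed
  qed
  then show ?thesis
    using one by (intro poly_mapping_eqI) (auto simp: lookup_single in_keys_iff when_def)
qed
lemma weight_le_imp_keys_subset:
  assumes "weight \<mu> \<le> n + 1" "\<mu> \<noteq> Poly_Mapping.single (n - 1) 1" "n \<ge> 1"
  shows "Poly_Mapping.keys \<mu> \<subseteq> {..<n - 1}"
proof
  fix k assume k: "k \<in> Poly_Mapping.keys \<mu>"
  show "k \<in> {..<n - 1}"
  proof (rule ccontr)
    assume "k \<notin> {..<n - 1}"
    then have "\<mu> = Poly_Mapping.single k 1"
      using assms(1,3) by (intro weight_le_imp_eq_single_one[OF k]) auto
    moreover from this have "k = n - 1"
      using \<open>k \<notin> {..<n - 1}\<close> assms(1,3) by (simp add: weight_def)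
    ultimately show False using assms(2) by simp
  qed
qed

definition weight_le :: "qpoly \<Rightarrow> nat \<Rightarrow> bool" where
  "weight_le p m \<longleftrightarrow> (\<forall>\<mu>\<in>Poly_Mapping.keys p. weight \<mu> \<le> m)"

lemma weight_le_zero: "weight_le 0 m"
  by (simp add: weight_le_def)

lemma weight_le_if_keys_subset_zero: "Poly_Mapping.keys p \<subseteq> {0} \<Longrightarrow> weight_le p m"
  unfolding weight_le_def by (auto simp: weight_def)

lemma weight_le_add: "weight_le p m \<Longrightarrow> weight_le q m \<Longrightarrow> weight_le (p + q) m"
  unfolding weight_le_def using keys_add[of p q] by blast

lemma weight_le_uminus: "weight_le p m \<Longrightarrow> weight_le (- p) m"
  unfolding weight_le_def by simp

lemma weight_le_diff: "weight_le p m \<Longrightarrow> weight_le q m \<Longrightarrow> weight_le (p - q) m"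
  unfolding weight_le_def using keys_diff[of p q] by blast

lemma weight_le_mult: "weight_le p m1 \<Longrightarrow> weight_le q m2 \<Longrightarrow> weight_le (p * q) (m1 + m2)"
  unfolding weight_le_def
proof
  fix \<mu>
  assume p: "\<forall>\<mu>\<in>Poly_Mapping.keys p. weight \<mu> \<le> m1" and q: "\<forall>\<mu>\<in>Poly_Mapping.keys q. weight \<mu> \<le> m2"
    and "\<mu> \<in> Poly_Mapping.keys (p * q)"
  then obtain x y where "\<mu> = x + y" "x \<in> Poly_Mapping.keys p" "y \<in> Poly_Mapping.keys q"
    using keys_mult[of p q] by blast
  then show "weight \<mu> \<le> m1 + m2" using p q by (simp add: weight_add add_mono)
qed

lemma weight_le_sum: "(\<And>i. i \<in> I \<Longrightarrow> weight_le (f i) m) \<Longrightarrow> weight_le (\<Sum>i\<in>I. f i) m"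
  by (induction I rule: infinite_finite_induct) (simp_all add: weight_le_zero weight_le_add)

lemma weight_le_imp_lookup_eq_zero: "weight_le p m \<Longrightarrow> m < weight \<mu> \<Longrightarrow> Poly_Mapping.lookup p \<mu> = 0"
  unfolding weight_le_def by (meson in_keys_iff not_le)

definition graded :: "qpoly fps \<Rightarrow> bool" where
  "graded f \<longleftrightarrow> (\<forall>m. weight_le (f $ m) m)"

lemma graded_mult: "graded f \<Longrightarrow> graded g \<Longrightarrow> graded (f * g)"
  unfolding graded_def
proof
  fix m assume f: "\<forall>m. weight_le (f $ m) m" and g: "\<forall>m. weight_le (g $ m) m"
  have "weight_le (\<Sum>i = 0..m. f $ i * g $ (m - i)) m"
  proof (rule weight_le_sum)
    fix i assume "i \<in> {0..m}"
    then have "weight_le (f $ i * g $ (m - i)) (i + (m - i))"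
      using f g by (intro weight_le_mult) auto
    then show "weight_le (f $ i * g $ (m - i)) m" using \<open>i \<in> {0..m}\<close> by simp
  qed
  then show "weight_le ((f * g) $ m) m" by (simp add: fps_mult_nth)
qed

lemma graded_one: "graded 1"
  unfolding graded_def by (auto intro: weight_le_if_keys_subset_zero simp: fps_one_nth)

lemma graded_power: "graded f \<Longrightarrow> graded (f ^ k)"
  by (induction k) (simp_all add: graded_one graded_mult)

lemma graded_prod: "(\<And>i. i \<in> I \<Longrightarrow> graded (f i)) \<Longrightarrow> graded (\<Prod>i\<in>I. f i)"
  by (induction I rule: infinite_finite_induct) (simp_all add: graded_one graded_mult)

lemma graded_right_inverse:
  assumes "graded f"
  shows "graded (fps_right_inverse f 1)"
  unfolding graded_def
proof
  fix m
  show "weight_le (fps_right_inverse f 1 $ m) m"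
  proof (induction m rule: less_induct)
    case (less m)
    show ?case
    proof (cases m)
      case 0
      then show ?thesis by (simp add: weight_le_if_keys_subset_zero)
    next
      case (Suc k)
      have "weight_le (\<Sum>i = 1..m. f $ i * fps_right_inverse_constructor f 1 (m - i)) m"
      proof (rule weight_le_sum)
        fix i assume i: "i \<in> {1..m}"
        then have "weight_le (f $ i * fps_right_inverse_constructor f 1 (m - i)) (i + (m - i))"
          using assms less[of "m - i"] unfolding graded_def by (intro weight_le_mult) auto
        then show "weight_le (f $ i * fps_right_inverse_constructor f 1 (m - i)) m" using i by simp
      qed
      moreover have "fps_right_inverse f 1 $ m =
          - (\<Sum>i = 1..m. f $ i * fps_right_inverse_constructor f 1 (m - i))"
        unfolding Suc by (simp only: fps_nth_Abs_fps fps_right_inverse_constructor.simps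
            mult_minus_left mult_1_left)
      ultimately show ?thesis by (simp only: weight_le_uminus)
    qed
  qed
qed

lemma A_fps_nth: "A_fps $ m = (if m = 0 then 1 else 0) + (if m < 2 then 0 else Var (m - 2))"
  by (simp add: fps_X_power_mult_right_nth)

lemma L_fps_nth: "L_fps i $ m = (if m = 0 then 1 else 0) + (if m = 1 then of_int i else 0)"
  by (simp add: L_fps_def fps_of_int[symmetric])

lemma weight_le_A_fps_nth: "weight_le (A_fps $ m) m"
proof -
  have "weight_le (Var (m - 2)) m" if "\<not> m < 2"
    using that by (simp add: weight_le_def weight_def Var_def)
  then show ?thesis
    unfolding A_fps_nth by (intro weight_le_add) (auto intro: weight_le_if_keys_subset_zero weight_le_zero)
qed

lemma graded_A_fps: "graded A_fps"
  unfolding graded_def using weight_le_A_fps_nth by blast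

lemma graded_L_fps: "graded (L_fps i)"
proof -
  have "Poly_Mapping.keys (of_int i :: qpoly) \<subseteq> {0}"
    by (auto simp: in_keys_iff lookup_of_int when_def split: if_splits)
  then show ?thesis
    unfolding graded_def L_fps_nth
    by (intro allI weight_le_add) (auto intro: weight_le_if_keys_subset_zero)
qed

lemma graded_A_pow: "graded (A_pow j)"
  unfolding A_pow_def A_inv_def by (auto intro!: graded_power graded_right_inverse graded_A_fps)

lemma graded_Q_fps: "graded (Q_fps j)"
  unfolding Q_fps_def L_inv_def by (auto intro!: graded_prod graded_right_inverse graded_L_fps)

lemma graded_G_int: "graded (G_int j)"
  unfolding G_int_def by (intro graded_mult graded_A_pow graded_Q_fps)

lemma weight_le_G_int_nth: "weight_le (G_int j $ m) m"
  using graded_G_int unfolding graded_def by blast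

section \<open>The coefficient of \<open>a\<^sub>n\<^sub>-\<^sub>1\<close>\<close>

definition lin_coeff :: "nat \<Rightarrow> qpoly fps \<Rightarrow> rat" where
  "lin_coeff i f = Poly_Mapping.lookup (f $ (i + 2)) (Poly_Mapping.single i 1)"

definition const_coeff :: "qpoly fps \<Rightarrow> rat" where
  "const_coeff f = Poly_Mapping.lookup (f $ 0) 0"

lemma lin_coeff_mult:
  assumes f: "graded f" and g: "graded g"
  shows "lin_coeff i (f * g) = lin_coeff i f * const_coeff g + const_coeff f * lin_coeff i g"
proof -
  define \<mu> where "\<mu> = (Poly_Mapping.single i 1 :: monomial)"
  have lookup_\<mu>: "Poly_Mapping.lookup (h $ k) \<mu> = 0" if "graded h" "k < i + 2" for h k
    using that by (intro weight_le_imp_lookup_eq_zero) (auto simp: graded_def \<mu>_def weight_def)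
  have "lin_coeff i (f * g) =
      (\<Sum>k = 0..i + 2. Poly_Mapping.lookup (f $ k) \<mu> * Poly_Mapping.lookup (g $ (i + 2 - k)) 0) +
      (\<Sum>k = 0..i + 2. Poly_Mapping.lookup (f $ k) 0 * Poly_Mapping.lookup (g $ (i + 2 - k)) \<mu>)"
    unfolding lin_coeff_def fps_mult_nth lookup_sum \<mu>_def lookup_mult_single_one sum.distrib ..
  also have "(\<Sum>k = 0..i + 2. Poly_Mapping.lookup (f $ k) \<mu> * Poly_Mapping.lookup (g $ (i + 2 - k)) 0) =
      (\<Sum>k\<in>{i + 2}. Poly_Mapping.lookup (f $ k) \<mu> * Poly_Mapping.lookup (g $ (i + 2 - k)) 0)"
    by (rule sum.mono_neutral_right) (auto simp: lookup_\<mu>[OF f])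
  also have "(\<Sum>k = 0..i + 2. Poly_Mapping.lookup (f $ k) 0 * Poly_Mapping.lookup (g $ (i + 2 - k)) \<mu>) =
      (\<Sum>k\<in>{0}. Poly_Mapping.lookup (f $ k) 0 * Poly_Mapping.lookup (g $ (i + 2 - k)) \<mu>)"
    by (rule sum.mono_neutral_right) (auto simp: lookup_\<mu>[OF g])
  finally show ?thesis
    by (simp add: lin_coeff_def const_coeff_def \<mu>_def)
qed

lemma lin_coeff_A_pow: "lin_coeff i (A_pow j) = of_int j"
proof -
  have "lin_coeff i A_fps = 1"
    unfolding lin_coeff_def A_fps_nth by (simp add: Var_def)
  moreover have "const_coeff A_fps = 1" "const_coeff (A_pow j) = 1" for j
    by (simp_all add: const_coeff_def A_pow_nth_zero)
  ultimately have "lin_coeff i (A_pow (j + 1)) - of_int (j + 1) = lin_coeff i (A_pow j) - of_int j" for j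
    by (simp add: A_pow_succ lin_coeff_mult graded_A_pow graded_A_fps)
  then have "lin_coeff i (A_pow j) - of_int j = lin_coeff i (A_pow 0) - of_int 0"
    by (rule int_fun_eq_if_shift_invariant)
  then show ?thesis
    by (simp add: lin_coeff_def A_pow_def)
qed

lemma lin_coeff_Q_fps: "lin_coeff i (Q_fps j) = 0"
proof -
  have "lin_coeff i (L_fps j) = 0" "const_coeff (L_fps j) = 1" "const_coeff (Q_fps j) = 1" for j
    by (simp_all add: lin_coeff_def const_coeff_def L_fps_nth Q_fps_nth_zero)
  then have "lin_coeff i (Q_fps (j + 1)) = lin_coeff i (Q_fps j)" for j
    by (subst (2) Q_fps_eq_Q_fps_succ_mult) (simp add: lin_coeff_mult graded_Q_fps graded_L_fps)
  then have "lin_coeff i (Q_fps j) = lin_coeff i (Q_fps 0)"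
    by (rule int_fun_eq_if_shift_invariant)
  then show ?thesis
    by (simp add: lin_coeff_def Q_fps_def)
qed

lemma lin_coeff_G_int: "lin_coeff i (G_int j) = of_int j"
  by (simp add: G_int_def lin_coeff_mult graded_A_pow graded_Q_fps lin_coeff_A_pow lin_coeff_Q_fps
      const_coeff_def A_pow_nth_zero Q_fps_nth_zero)

lemma weight_le_F_int:
  assumes "n \<ge> 1"
  shows "weight_le (F_int n j) (n + 1)"
  unfolding F_int_eq_sum
proof (rule weight_le_sum)
  fix i assume i: "i \<in> {0..n - 1}"
  have "weight_le ((G_int j $ (i + 2) - G_int (1 - j) $ (i + 2)) * A_fps $ (n - 1 - i))
      ((i + 2) + (n - 1 - i))"
    by (intro weight_le_mult weight_le_diff weight_le_G_int_nth weight_le_A_fps_nth)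
  then show "weight_le ((G_int j $ (i + 2) - G_int (1 - j) $ (i + 2)) * A_fps $ (n - 1 - i)) (n + 1)"
    using i assms by simp
qed

text \<open>Only the terms with \<open>i = n - 1\<close> and constant coefficient of \<open>A\<close> can contain
  \<open>a\<^sub>n\<^sub>-\<^sub>1\<close>, which has the top weight \<open>n + 1\<close>.\<close>

lemma lookup_F_int_single:
  assumes "n \<ge> 1"
  shows "Poly_Mapping.lookup (F_int n j) (Poly_Mapping.single (n - 1) 1) = of_int (2 * j - 1)"
proof -
  define \<mu> where "\<mu> = (Poly_Mapping.single (n - 1) 1 :: monomial)"
  define D where "D i = G_int j $ (i + 2) - G_int (1 - j) $ (i + 2)" for i
  have weight_\<mu>: "weight \<mu> = n + 1" using assms by (simp add: \<mu>_def weight_def)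
  have weight_D: "weight_le (D i) (i + 2)" for i
    unfolding D_def by (intro weight_le_diff weight_le_G_int_nth)
  have A_fps_\<mu>: "Poly_Mapping.lookup (A_fps $ (n - 1 - i)) \<mu> = 0" if "i \<le> n - 1" for i
    using that weight_\<mu> by (intro weight_le_imp_lookup_eq_zero[OF weight_le_A_fps_nth]) auto
  have "Poly_Mapping.lookup (F_int n j) \<mu> =
      (\<Sum>i = 0..n - 1. Poly_Mapping.lookup (D i) \<mu> * Poly_Mapping.lookup (A_fps $ (n - 1 - i)) 0)"
    unfolding F_int_eq_sum lookup_sum D_def[symmetric] \<mu>_def lookup_mult_single_one
    by (intro sum.cong refl)
      (use A_fps_\<mu>[unfolded \<mu>_def] in \<open>simp only: atLeastAtMost_iff mult_zero_right add_0_right\<close>)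
  also have "\<dots> = (\<Sum>i\<in>{n - 1}. Poly_Mapping.lookup (D i) \<mu> * Poly_Mapping.lookup (A_fps $ (n - 1 - i)) 0)"
    using weight_D weight_\<mu>
    by (intro sum.mono_neutral_right) (auto intro!: weight_le_imp_lookup_eq_zero)
  also have "\<dots> = lin_coeff (n - 1) (G_int j) - lin_coeff (n - 1) (G_int (1 - j))"
    using assms by (simp add: D_def lin_coeff_def \<mu>_def lookup_minus)
  finally show ?thesis
    by (simp add: lin_coeff_G_int \<mu>_def)
qed

lemma keys_F_int_minus_u_Var:
  assumes n: "n \<ge> 1" and \<mu>: "\<mu> \<in> Poly_Mapping.keys (F_int n j - u_int j * Var (n - 1))"
  shows "Poly_Mapping.keys \<mu> \<subseteq> {..<n - 1}"
proof (rule weight_le_imp_keys_subset[OF _ _ n])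
  have lookup_eq: "Poly_Mapping.lookup (F_int n j - u_int j * Var (n - 1)) \<nu> =
      Poly_Mapping.lookup (F_int n j) \<nu> - of_int (2 * j - 1) * Poly_Mapping.lookup (Var (n - 1)) \<nu>"
    for \<nu> unfolding u_int_def by (simp only: lookup_minus lookup_of_int_mult)
  show ne: "\<mu> \<noteq> Poly_Mapping.single (n - 1) 1"
  proof
    assume "\<mu> = Poly_Mapping.single (n - 1) 1"
    then show False
      using \<mu> lookup_eq[of \<mu>] lookup_F_int_single[OF n, of j] by (simp add: in_keys_iff Var_def)
  qed
  then have "Poly_Mapping.lookup (F_int n j) \<mu> \<noteq> 0"
    using \<mu> lookup_eq[of \<mu>] by (simp add: in_keys_iff Var_def lookup_single_not_eq)
  then show "weight \<mu> \<le> n + 1"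
    using weight_le_F_int[OF n, of j] unfolding weight_le_def by (simp add: in_keys_iff)
qed

definition restrict_vars :: "nat set \<Rightarrow> qpoly \<Rightarrow> qpoly" where
  "restrict_vars X = Poly_Mapping.mapp (\<lambda>\<mu> r. if Poly_Mapping.keys \<mu> \<subseteq> X then r else 0)"

lemma lookup_restrict_vars:
  "Poly_Mapping.lookup (restrict_vars X p) \<mu> =
    (if Poly_Mapping.keys \<mu> \<subseteq> X then Poly_Mapping.lookup p \<mu> else 0)"
  by (simp add: restrict_vars_def lookup_mapp when_def in_keys_iff)

lemma restrict_vars_add: "restrict_vars X (p + q) = restrict_vars X p + restrict_vars X q"
  by (rule poly_mapping_eqI) (simp add: lookup_restrict_vars lookup_add)

lemma restrict_vars_zero: "restrict_vars X 0 = 0"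
  by (rule poly_mapping_eqI) (simp add: lookup_restrict_vars)

lemma restrict_vars_sum: "restrict_vars X (\<Sum>i\<in>I. f i) = (\<Sum>i\<in>I. restrict_vars X (f i))"
  by (induction I rule: infinite_finite_induct) (simp_all add: restrict_vars_zero restrict_vars_add)

lemma restrict_vars_of_int_mult: "restrict_vars X (of_int k * p) = of_int k * restrict_vars X p"
  by (rule poly_mapping_eqI) (simp add: lookup_restrict_vars lookup_of_int_mult)

lemma restrict_vars_id:
  "(\<And>\<mu>. \<mu> \<in> Poly_Mapping.keys p \<Longrightarrow> Poly_Mapping.keys \<mu> \<subseteq> X) \<Longrightarrow> restrict_vars X p = p"
  by (rule poly_mapping_eqI) (auto simp: lookup_restrict_vars in_keys_iff)

lemma vars_restrict_vars: "vars (restrict_vars X p) \<subseteq> X"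
proof -
  have "Poly_Mapping.keys \<mu> \<subseteq> X" if "\<mu> \<in> Poly_Mapping.keys (restrict_vars X p)" for \<mu>
    using that by (simp add: in_keys_iff lookup_restrict_vars split: if_splits)
  then show ?thesis unfolding vars_def by blast
qed

lemma poly_eq_sum_atMost:
  fixes p :: "'a::comm_semiring_1 poly"
  assumes "degree p \<le> n"
  shows "poly p x = (\<Sum>i\<le>n. coeff p i * x ^ i)"
  unfolding poly_altdef using assms by (intro sum.mono_neutral_left) (auto simp: coeff_eq_0)

lemma F_int_eq_u_poly_v:
  assumes "n \<ge> 1"
  obtains Q where "degree Q \<le> n" "\<And>j. F_int n j = u_int j * poly Q (v_int j)"
proof -
  obtain Q where Q: "v_degree_le 1 (2 * n + 2) Q" "\<And>j. F_int n j = u_int j * poly Q (v_int j)"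
    using uv_form_odd[OF int_polyfun_imp_uv_form[OF int_polyfun_F_int[OF assms]] F_int_reflect]
    by blast
  have "degree Q \<le> n"
  proof (rule degree_le, intro allI impI)
    fix i assume "n < i"
    then show "coeff Q i = 0" using Q(1) unfolding v_degree_le_def by fastforce
  qed
  then show thesis using that Q(2) by blast
qed

lemma F_int_decomposition:
  assumes n: "n \<ge> 1"
  obtains T where "\<forall>i>n. T i = 0" "\<forall>i\<le>n. vars (T i) \<subseteq> {..<n - 1}"
    "\<And>j. F_int n j = u_int j * (Var (n - 1) + (\<Sum>i\<le>n. T i * v_int j ^ i))"
proof -
  obtain Q where deg: "degree Q \<le> n" and Q: "\<And>j. F_int n j = u_int j * poly Q (v_int j)"
    using F_int_eq_u_poly_v[OF n] by blast
  define R where "R = Q - [:Var (n - 1):]"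
  define T where "T i = (if i \<le> n then restrict_vars {..<n - 1} (coeff R i) else 0)" for i
  have "F_int n j = u_int j * (Var (n - 1) + (\<Sum>i\<le>n. T i * v_int j ^ i))" for j
  proof -
    have "degree R \<le> n"
      unfolding R_def using deg by (intro degree_diff_le) auto
    moreover have "poly Q x = Var (n - 1) + poly R x" for x
      by (simp add: R_def)
    ultimately have "poly Q x = Var (n - 1) + (\<Sum>i\<le>n. coeff R i * x ^ i)" for x
      by (simp add: poly_eq_sum_atMost)
    then have expand: "F_int n j - u_int j * Var (n - 1) =
        (\<Sum>i\<le>n. of_int ((2 * j - 1) * (j * (j - 1)) ^ i) * coeff R i)"
      by (simp add: Q u_int_def v_int_def algebra_simps sum_distrib_left)
    have "F_int n j - u_int j * Var (n - 1) =
        restrict_vars {..<n - 1} (F_int n j - u_int j * Var (n - 1))"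
      using keys_F_int_minus_u_Var[OF n] by (intro restrict_vars_id[symmetric]) blast
    also have "\<dots> = (\<Sum>i\<le>n. of_int ((2 * j - 1) * (j * (j - 1)) ^ i) *
        restrict_vars {..<n - 1} (coeff R i))"
      by (simp only: expand restrict_vars_sum restrict_vars_of_int_mult)
    also have "\<dots> = (\<Sum>i\<le>n. of_int ((2 * j - 1) * (j * (j - 1)) ^ i) * T i)"
      by (rule sum.cong) (simp_all add: T_def)
    finally have "F_int n j - u_int j * Var (n - 1) =
        (\<Sum>i\<le>n. of_int ((2 * j - 1) * (j * (j - 1)) ^ i) * T i)" .
    then show ?thesis
      by (simp add: u_int_def v_int_def algebra_simps sum_distrib_left)
  qed
  moreover have "\<forall>i>n. T i = 0" "\<forall>i\<le>n. vars (T i) \<subseteq> {..<n - 1}"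
    by (simp_all add: T_def vars_restrict_vars)
  ultimately show thesis using that by blast
qed

lemma S_prop_exists:
  assumes "n \<ge> 1"
  shows "\<exists>T. S_prop n T"
proof -
  obtain T where T: "\<forall>i>n. T i = 0" "\<forall>i\<le>n. vars (T i) \<subseteq> {..<n - 1}"
    and F: "\<And>j. F_int n j = u_int j * (Var (n - 1) + (\<Sum>i\<le>n. T i * v_int j ^ i))"
    using F_int_decomposition[OF assms] by blast
  have "F_fps j $ (n - 1) = of_nat (2 * j - 1) *
      (Var (n - 1) + T 0 + (\<Sum>i = 1..n. T i * of_nat (j * (j - 1)) ^ i))" if "j > 0" for j
  proof -
    have "u_int (int j) = of_nat (2 * j - 1)" "v_int (int j) = of_nat (j * (j - 1))"
      using that by (simp_all add: u_int_def v_int_def of_nat_diff)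
    moreover have "(\<Sum>i\<le>n. T i * x ^ i) = T 0 + (\<Sum>i = 1..n. T i * x ^ i)" for x
      by (simp add: atMost_atLeast0 sum.atLeast_Suc_atMost[of 0 n, simplified])
    ultimately show ?thesis
      using F_fps_nth_eq_F_int[OF that] F[of "int j"] by (simp add: add.assoc)
  qed
  then show ?thesis
    using T unfolding S_prop_def by blast
qed

lemma S_prop_S: "n \<ge> 1 \<Longrightarrow> S_prop n (S n)"
  unfolding S_def using S_prop_exists S_prop_unique by (metis theI)

theorem proposition4p2:
  fixes \<phi> :: "rat \<Rightarrow> 'a::comm_ring_1" and c :: "nat \<Rightarrow> 'a" and n :: nat
  assumes hom1: "\<phi> 1 = 1"
    and hom_add: "\<And>x y. \<phi> (x + y) = \<phi> x + \<phi> y"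
    and hom_mult: "\<And>x y. \<phi> (x * y) = \<phi> x * \<phi> y"
    and n: "n \<ge> 3"
  shows "eval_shift \<phi> c (S n 0) = (\<Sum>i1 = 1..n - 2. c i1 * c (n - 1 - i1))"
proof -
  have "S n 0 = (\<Sum>i = 0..n - 3. Var i * Var (n - 3 - i))"
    using S_prop_zero[OF S_prop_S n] n by simp
  moreover have "n - 3 + 1 = n - 2" "n - 3 + 2 = n - 1"
    using n by auto
  ultimately show ?thesis
    using eval_shift_convolution[OF hom1 hom_add, of c "n - 3"] by simp
qed

end
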